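(* Let $n\ge 2$ and let $K \subset \mathbb{R}^n$ be a compact convex set with nonempty interior. Then there exists $x^0 \in K$ such that $$\int_{K - x^0} \frac{y}{|y|^n}\,dy = 0,$$ where $K - x^0 = \{y - x^0 : y \in K\}$.
   Context: The integrand $y/|y|^n$ is locally integrable on $\mathbb{R}^n$, so the integral is well defined. *)

theory Defs
  imports "HOL-Analysis.Analysis"
begin

end

theory Submission
  imports Defs "HOL-Analysis.Analysis"
begin

text \<open>Write \<open>F(x) = kernel_field K x = \<integral>\<^bsub>K - x\<^esub> y / |y|\<^sup>n dy\<close>. The kernel is
  locally integrable and the frontier of a convex set is negligible, so \<open>F\<close> is continuous. By
  Brouwer's theorem the map \<open>x \<mapsto> P\<^sub>K(x + F x)\<close>, with \<open>P\<^sub>K\<close> the nearest-point projection onto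
  \<open>K\<close>, has a fixed point \<open>x\<^sub>0\<close>; equivalently \<open>F(x\<^sub>0) \<bullet> (z - x\<^sub>0) \<le> 0\<close> for all \<open>z \<in> K\<close>.
  Integrating this inequality over \<open>z = x\<^sub>0 + y\<close> against the nonnegative weight \<open>1 / |y|\<^sup>n\<close>
  gives \<open>|F(x\<^sub>0)|\<^sup>2 \<le> 0\<close>.\<close>

definition newton_kernel :: "'a::euclidean_space \<Rightarrow> 'a" where
  "newton_kernel y = (1 / norm y ^ DIM('a)) *\<^sub>R y"

definition kernel_field :: "'a::euclidean_space set \<Rightarrow> 'a \<Rightarrow> 'a" where
  "kernel_field K x = (\<integral>y. indicator K (y + x) *\<^sub>R newton_kernel y \<partial>lebesgue)"

lemma borel_measurable_newton_kernel [measurable]: "newton_kernel \<in> borel_measurable borel"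
  unfolding newton_kernel_def by measurable

lemma borel_measurable_indicator_translate_newton_kernel:
  assumes [measurable]: "K \<in> sets borel"
  shows "(\<lambda>y::'a::euclidean_space. indicator K (y + x) *\<^sub>R newton_kernel y) \<in> borel_measurable lebesgue"
  by (rule measurable_completion, simp) measurable

lemma norm_newton_kernel:
  fixes y :: "'a::euclidean_space"
  assumes "y \<noteq> 0"
  shows "norm (newton_kernel y) = (1 / norm y) ^ (DIM('a) - 1)"
proof -
  obtain M where "DIM('a) = Suc M" using DIM_positive by (metis Suc_pred)
  then show ?thesis using assms by (simp add: newton_kernel_def power_divide field_simps)
qed

lemma exists_dyadic_shell:
  fixes t R :: real
  assumes "0 < t" "t \<le> R"
  shows "\<exists>k::nat. R / 2^(k+1) < t \<and> t \<le> R / 2^k"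
proof (rule ccontr)
  assume no_shell: "\<not> ?thesis"
  have below: "t \<le> R / 2^k" for k
  proof (induction k)
    case 0 then show ?case using assms by simp
  next
    case (Suc k) then show ?case using no_shell by (metis not_less Suc_eq_plus1)
  qed
  obtain k :: nat where "R / t < 2^k" using real_arch_pow[of 2 "R/t"] by auto
  then have "R < 2^k * t" using assms by (simp add: divide_less_eq mult.commute)
  moreover have "t * 2^k \<le> R" using below[of k] by (simp add: le_divide_eq)
  ultimately show False by (simp add: mult.commute)
qed

text \<open>On the shell \<open>R/2\<^sup>j\<^sup>+\<^sup>1 < |y| \<le> R/2\<^sup>j\<close> the kernel is at most \<open>(2\<^sup>j\<^sup>+\<^sup>1/R)\<^sup>n\<^sup>-\<^sup>1\<close>, while the
  ball of radius \<open>R/2\<^sup>j\<close> has volume proportional to \<open>(R/2\<^sup>j)\<^sup>n\<close>: the resulting series is geometric.\<close>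

lemma norm_newton_kernel_le_dyadic_sum:
  fixes y :: "'a::euclidean_space" and R :: real
  assumes "R > 0"
  shows "ennreal (norm (indicator (cball 0 R) y *\<^sub>R newton_kernel y))
    \<le> (\<Sum>j. ennreal ((2^(j+1) / R) ^ (DIM('a) - 1)) * indicator (cball 0 (R / 2^j)) y)"
proof (cases "y = 0 \<or> norm y > R")
  case True then show ?thesis by (auto simp: indicator_def newton_kernel_def)
next
  case False
  then have y0: "norm y > 0" and yR: "norm y \<le> R" by auto
  obtain k where k1: "R / 2^(k+1) < norm y" and k2: "norm y \<le> R / 2^k"
    using exists_dyadic_shell[OF y0 yR] by auto
  have "norm (indicator (cball 0 R) y *\<^sub>R newton_kernel y) = (1 / norm y) ^ (DIM('a) - 1)"
    using yR y0 by (simp add: norm_newton_kernel)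
  also have "\<dots> \<le> (2^(k+1) / R) ^ (DIM('a) - 1)"
    using k1 y0 assms by (intro power_mono) (simp_all add: field_simps)
  finally have "ennreal (norm (indicator (cball 0 R) y *\<^sub>R newton_kernel y))
      \<le> ennreal ((2^(k+1) / R) ^ (DIM('a) - 1)) * indicator (cball 0 (R / 2^k)) y"
    using k2 by (simp add: indicator_def ennreal_leI)
  also have "\<dots> \<le> (\<Sum>j. ennreal ((2^(j+1) / R) ^ (DIM('a) - 1)) * indicator (cball 0 (R / 2^j)) y)"
    using sum_le_suminf[of "\<lambda>j. ennreal ((2^(j+1) / R) ^ (DIM('a) - 1)) * indicator (cball 0 (R / 2^j)) y" "{k}"]
    by (simp only: sum.insert sum.empty finite.emptyI finite.insertI empty_iff add_0_right summableI
        zero_le simp_thms)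
  finally show ?thesis .
qed

lemma integrable_newton_kernel_cball:
  assumes "R > 0"
  shows "integrable lebesgue (\<lambda>y::'a::euclidean_space. indicator (cball 0 R) y *\<^sub>R newton_kernel y)"
proof -
  define M where "M = DIM('a) - 1"
  have DIM_eq: "DIM('a) = Suc M" using DIM_positive unfolding M_def by simp
  define V where "V = unit_ball_vol (real DIM('a))"
  define d where "d j = (2^(j+1) / R) ^ M" for j :: nat
  have "(\<integral>\<^sup>+y. norm (indicator (cball (0::'a) R) y *\<^sub>R newton_kernel y) \<partial>lebesgue)
      = (\<integral>\<^sup>+y. norm (indicator (cball (0::'a) R) y *\<^sub>R newton_kernel y) \<partial>lborel)"
    by (rule nn_integral_completion)
  also have "\<dots> \<le> (\<integral>\<^sup>+y. (\<Sum>j. ennreal (d j) * indicator (cball (0::'a) (R / 2^j)) y) \<partial>lborel)"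
    unfolding d_def M_def using assms by (intro nn_integral_mono norm_newton_kernel_le_dyadic_sum)
  also have "\<dots> = (\<Sum>j. \<integral>\<^sup>+y. ennreal (d j) * indicator (cball (0::'a) (R / 2^j)) y \<partial>lborel)"
    by (rule nn_integral_suminf) (intro borel_measurable_times_ennreal borel_measurable_const
        borel_measurable_indicator, simp add: borel_closed)
  also have "\<dots> = (\<Sum>j. ennreal (d j) * emeasure lborel (cball (0::'a) (R / 2^j)))"
    by (subst nn_integral_cmult_indicator) auto
  also have "\<dots> = (\<Sum>j. ennreal (2^M * R * V * (1/2)^j))"
  proof (rule suminf_cong)
    fix j :: nat
    have "d j * (V * (R / 2^j) ^ DIM('a)) = V * ((2^(j+1) / R * (R / 2^j)) ^ M * (R / 2^j))"
      unfolding d_def DIM_eq by (simp add: power_mult_distrib[symmetric] mult_ac)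
    also have "\<dots> = 2^M * R * V * (1/2)^j"
      using assms by (simp add: field_simps)
    finally have volume: "d j * (V * (R / 2^j) ^ DIM('a)) = 2^M * R * V * (1/2)^j" .
    have "d j \<ge> 0" "V \<ge> 0" unfolding d_def V_def using assms by simp_all
    then show "ennreal (d j) * emeasure lborel (cball (0::'a) (R / 2^j))
        = ennreal (2^M * R * V * (1/2)^j)"
      using assms by (simp add: emeasure_cball ennreal_mult'[symmetric] V_def volume[unfolded V_def])
  qed
  also have "\<dots> = ennreal (\<Sum>j. 2^M * R * V * (1/2)^j)"
    using assms by (intro suminf_ennreal2) (auto simp: V_def intro!: summable_mult summable_geometric)
  also have "\<dots> < \<infinity>" by simp
  finally show ?thesis
    using borel_measurable_indicator_translate_newton_kernel[of "cball 0 R" 0]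
    by (simp add: integrable_iff_bounded)
qed

lemma norm_indicator_translate_newton_kernel_le:
  fixes K :: "'a::euclidean_space set"
  assumes "K \<subseteq> cball 0 B" "norm x \<le> C"
  shows "norm (indicator K (y + x) *\<^sub>R newton_kernel y)
    \<le> norm (indicator (cball 0 (B + C)) y *\<^sub>R newton_kernel y)"
proof (cases "y + x \<in> K")
  case True
  then have "norm (y + x) \<le> B" using assms(1) by auto
  then have "norm y \<le> B + C" using assms(2) norm_triangle_ineq4[of "y + x" x] by simp
  then show ?thesis using True by (simp add: indicator_def)
qed (simp add: indicator_def)

lemma integrable_indicator_translate_newton_kernel:
  fixes K :: "'a::euclidean_space set"
  assumes "bounded K" "K \<in> sets borel"
  shows "integrable lebesgue (\<lambda>y. indicator K (y + x) *\<^sub>R newton_kernel y)"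
proof -
  obtain B where "B > 0" "K \<subseteq> cball 0 B"
    using assms(1) by (meson bounded_pos mem_cball_0 subsetI)
  have "integrable lebesgue (\<lambda>y::'a. indicator (cball 0 (B + norm x)) y *\<^sub>R newton_kernel y)"
    using \<open>B > 0\<close> by (intro integrable_newton_kernel_cball) (simp add: add_pos_nonneg)
  then show ?thesis
  proof (rule Bochner_Integration.integrable_bound)
    show "(\<lambda>y. indicator K (y + x) *\<^sub>R newton_kernel y) \<in> borel_measurable lebesgue"
      using assms(2) by (rule borel_measurable_indicator_translate_newton_kernel)
    show "AE y in lebesgue. norm (indicator K (y + x) *\<^sub>R newton_kernel y)
        \<le> norm (indicator (cball 0 (B + norm x)) y *\<^sub>R newton_kernel y)"
      using \<open>K \<subseteq> cball 0 B\<close> by (intro AE_I2 norm_indicator_translate_newton_kernel_le) simp_all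
  qed
qed

lemma isCont_kernel_field:
  fixes K :: "'a::euclidean_space set"
  assumes "bounded K" "convex K" "K \<in> sets borel"
  shows "isCont (kernel_field K) a"
  unfolding continuous_at_sequentially comp_def
proof (intro allI impI)
  fix s :: "nat \<Rightarrow> 'a"
  assume lim: "s \<longlonglongrightarrow> a"
  obtain B where "B > 0" "K \<subseteq> cball 0 B"
    using assms(1) by (meson bounded_pos mem_cball_0 subsetI)
  obtain C where "C > 0" "\<And>i. norm (s i) \<le> C"
    using convergent_imp_Bseq[OF convergentI[OF lim]] by (auto elim: BseqE)
  have "negligible ((+) (- a) ` frontier K)"
    using assms(2) by (intro negligible_translation negligible_convex_frontier)
  then have "(+) (- a) ` frontier K \<in> null_sets lebesgue"
    unfolding negligible_iff_null_sets .
  moreover have "(+) (- a) ` frontier K = {y. y + a \<in> frontier K}"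
    by (auto simp: image_iff algebra_simps)
  ultimately have off_frontier: "AE y in lebesgue. y + a \<notin> frontier K"
    using AE_not_in by fastforce
  have "(\<lambda>i. indicator K (y + s i) *\<^sub>R newton_kernel y) \<longlonglongrightarrow> indicator K (y + a) *\<^sub>R newton_kernel y"
    if "y + a \<notin> frontier K" for y
    using that by (intro tendsto_scaleR tendsto_const isCont_tendsto_compose[where g = "indicator K"]
        tendsto_add lim) (simp_all add: isCont_indicator)
  then have "AE y in lebesgue.
      (\<lambda>i. indicator K (y + s i) *\<^sub>R newton_kernel y) \<longlonglongrightarrow> indicator K (y + a) *\<^sub>R newton_kernel y"
    using off_frontier by auto
  then show "(\<lambda>i. kernel_field K (s i)) \<longlonglongrightarrow> kernel_field K a"
    unfolding kernel_field_def
  proof (rule integral_dominated_convergence[rotated 3])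
    show "integrable lebesgue (\<lambda>y. norm (indicator (cball 0 (B + C)) y *\<^sub>R newton_kernel y))"
      using \<open>B > 0\<close> \<open>C > 0\<close> by (intro integrable_norm integrable_newton_kernel_cball) simp
    show "AE y in lebesgue. norm (indicator K (y + s i) *\<^sub>R newton_kernel y)
        \<le> norm (indicator (cball 0 (B + C)) y *\<^sub>R newton_kernel y)" for i
      using \<open>K \<subseteq> cball 0 B\<close> \<open>norm (s i) \<le> C\<close>
      by (intro AE_I2 norm_indicator_translate_newton_kernel_le)
  qed (use assms(3) in \<open>auto intro: borel_measurable_indicator_translate_newton_kernel\<close>)
qed

lemma exists_variational_inequality_solution:
  fixes F :: "'a::euclidean_space \<Rightarrow> 'a"
  assumes "compact S" "convex S" "S \<noteq> {}" "continuous_on S F"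
  shows "\<exists>x\<in>S. \<forall>z\<in>S. F x \<bullet> (z - x) \<le> 0"
proof -
  have "closed S" using assms(1) by (rule compact_imp_closed)
  have "continuous_on S (\<lambda>x. closest_point S (x + F x))"
    by (rule continuous_on_compose2[OF continuous_on_closest_point[OF assms(2) \<open>closed S\<close> assms(3)]])
      (auto intro!: continuous_intros assms(4))
  then obtain x where "x \<in> S" "closest_point S (x + F x) = x"
    using brouwer[OF assms(1-3)] closest_point_in_set[OF \<open>closed S\<close> assms(3)] by blast
  then show ?thesis
    using closest_point_dot[OF assms(2) \<open>closed S\<close>, of _ "x + F x"] by auto
qed

lemma kernel_field_eq_0_if_inner_nonpos:
  fixes K :: "'a::euclidean_space set"
  assumes "integrable lebesgue (\<lambda>y. indicator K (y + x) *\<^sub>R newton_kernel y)"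
    and "\<forall>z\<in>K. kernel_field K x \<bullet> (z - x) \<le> 0"
  shows "kernel_field K x = 0"
proof -
  let ?F = "kernel_field K x"
  have "?F \<bullet> ?F = (\<integral>y. ?F \<bullet> (indicator K (y + x) *\<^sub>R newton_kernel y) \<partial>lebesgue)"
    unfolding kernel_field_def using assms(1) by (rule integral_inner_right[symmetric])
  also have "\<dots> = - (\<integral>y. - (?F \<bullet> (indicator K (y + x) *\<^sub>R newton_kernel y)) \<partial>lebesgue)"
    by simp
  also have "\<dots> \<le> 0"
  proof -
    have "0 \<le> (\<integral>y. - (?F \<bullet> (indicator K (y + x) *\<^sub>R newton_kernel y)) \<partial>lebesgue)"
    proof (rule integral_nonneg_AE, rule AE_I2)
      fix y
      have "y + x \<in> K \<Longrightarrow> ?F \<bullet> y \<le> 0" using assms(2) by force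
      then show "0 \<le> - (?F \<bullet> (indicator K (y + x) *\<^sub>R newton_kernel y))"
        by (auto simp: newton_kernel_def indicator_def divide_nonpos_nonneg)
    qed
    then show ?thesis by simp
  qed
  finally show ?thesis by (metis inner_gt_zero_iff not_le)
qed

theorem mainTheorem6:
  fixes K :: "(real ^ 'n) set"
  assumes "CARD('n) \<ge> 2"
    and "compact K" and "convex K" and "interior K \<noteq> {}"
  shows "\<exists>x0 \<in> K.
           set_integrable lebesgue ((\<lambda>y. y - x0) ` K) (\<lambda>y. (1 / norm y ^ CARD('n)) *\<^sub>R y)
         \<and> (LINT y : (\<lambda>y. y - x0) ` K | lebesgue. (1 / norm y ^ CARD('n)) *\<^sub>R y) = 0"
proof -
  have "K \<noteq> {}" using assms(4) interior_subset by blast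
  have "bounded K" "K \<in> sets borel"
    using assms(2) by (simp_all add: compact_imp_bounded borel_compact)
  have "continuous_on K (kernel_field K)"
    using isCont_kernel_field[OF \<open>bounded K\<close> assms(3) \<open>K \<in> sets borel\<close>]
    by (simp add: continuous_at_imp_continuous_on)
  then obtain x0 where "x0 \<in> K" and normal: "\<forall>z\<in>K. kernel_field K x0 \<bullet> (z - x0) \<le> 0"
    using exists_variational_inequality_solution[OF assms(2,3) \<open>K \<noteq> {}\<close>] by blast
  have integrable: "integrable lebesgue (\<lambda>y. indicator K (y + x0) *\<^sub>R newton_kernel y)"
    using \<open>bounded K\<close> \<open>K \<in> sets borel\<close> by (rule integrable_indicator_translate_newton_kernel)
  have "kernel_field K x0 = 0"
    using integrable normal by (rule kernel_field_eq_0_if_inner_nonpos)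
  moreover have "indicator ((\<lambda>y. y - x0) ` K) y = (indicator K (y + x0) :: real)" for y
  proof -
    have "(\<lambda>y. y - x0) ` K = (\<lambda>y. y + x0) -` K" by (auto simp: image_iff algebra_simps)
    then show ?thesis by (simp add: indicator_vimage)
  qed
  ultimately show ?thesis
    using \<open>x0 \<in> K\<close> integrable unfolding set_integrable_def set_lebesgue_integral_def
    by (intro bexI[of _ x0]) (simp_all add: kernel_field_def newton_kernel_def)
qed

end
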